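(* Let $\mathcal F=\{F^c_{t,k}\}$ be an F-system. Then for every even positive integer $t$, $|S_{2t}\setminus Z_{3t,2t}|\ge|S_t\cup Z_{3t/2,t}|+|S_{2t,t}|$.
   Context: F-system: a family $\mathcal F=\{F^c_{t,k}\}$ of sets of positive integers, indexed by $c\in\{A,B\}$ and integers $0<k\le t$, such that (F1) $|F^c_{t,k}|\ge k$ for all $c,t,k$; and (F2) $F^A_{t,k}\cap F^B_{t',k'}=\emptyset$ for all $k\le t$, $k'\le t'$ with $k+k'\le\max(t,t')$. Notation: $F^c_t=\bigcup_{0<\kappa\le\tau\le t}F^c_{\tau,\kappa}$ for $c\in\{A,B\}$; $S_t=F^A_t\cap F^B_t$; $S_{2t,t}=S_{2t}\cap(F^A_{2t,t}\cup F^B_{2t,t})$; for even $t$, $Z_{3t/2,t}=F^A_{3t/2,t}\cap F^B_{3t/2,t}$ (so also $Z_{3t,2t}=F^A_{3t,2t}\cap F^B_{3t,2t}$). *)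

theory Defs
  imports Main "HOL-Library.Extended_Nat"
begin

datatype col = CA | CB

definition ecard :: "'a set \<Rightarrow> enat" where
  "ecard X = (if finite X then enat (card X) else \<infinity>)"

text \<open>An F-system: F c t k is the set F^c_{t,k}; only indices 0 < k <= t matter.\<close>
definition F_system :: "(col \<Rightarrow> nat \<Rightarrow> nat \<Rightarrow> nat set) \<Rightarrow> bool" where
  "F_system F \<longleftrightarrow>
     (\<forall>c t k. 0 < k \<and> k \<le> t \<longrightarrow> F c t k \<subseteq> {n. 0 < n}) \<and>
     (\<forall>c t k. 0 < k \<and> k \<le> t \<longrightarrow> ecard (F c t k) \<ge> enat k) \<and>
     (\<forall>t k t' k'. 0 < k \<and> k \<le> t \<and> 0 < k' \<and> k' \<le> t' \<and> k + k' \<le> max t t'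
        \<longrightarrow> F CA t k \<inter> F CB t' k' = {})"

definition Fu :: "(col \<Rightarrow> nat \<Rightarrow> nat \<Rightarrow> nat set) \<Rightarrow> col \<Rightarrow> nat \<Rightarrow> nat set" where
  "Fu F c t = (\<Union>\<tau>\<in>{1..t}. \<Union>\<kappa>\<in>{1..\<tau>}. F c \<tau> \<kappa>)"

definition S :: "(col \<Rightarrow> nat \<Rightarrow> nat \<Rightarrow> nat set) \<Rightarrow> nat \<Rightarrow> nat set" where
  "S F t = Fu F CA t \<inter> Fu F CB t"

definition S2 :: "(col \<Rightarrow> nat \<Rightarrow> nat \<Rightarrow> nat set) \<Rightarrow> nat \<Rightarrow> nat set" where
  "S2 F t = S F (2*t) \<inter> (F CA (2*t) t \<union> F CB (2*t) t)"

definition Z :: "(col \<Rightarrow> nat \<Rightarrow> nat \<Rightarrow> nat set) \<Rightarrow> nat \<Rightarrow> nat \<Rightarrow> nat set" where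
  "Z F t' k = F CA t' k \<inter> F CB t' k"

end

theory Submission
  imports Defs
begin

text \<open>
  Write t = 2s, so the target set is S_{4s} minus Z_{6s,4s}, and the two sets on the right
  are P = S_{2s} \<union> Z_{3s,2s} and Q = S_{4s,2s}.  The inequality follows from
  P \<union> Q \<subseteq> S_{4s} - Z_{6s,4s} together with P \<inter> Q = {}, since cardinality is monotone
  and additive on disjoint unions (also for infinite sets, measured in enat).

  Both facts are instances of condition (F2) only.  Elements of S_{t'} lie in some
  F^A_{\<tau>,\<kappa>} and some F^B_{\<tau>',\<kappa>'} with \<kappa> \<le> \<tau> \<le> t', so S_{t'} misses both
  F^A_{T,K} and F^B_{T,K} as soon as t' + K \<le> T; likewise Z_{t,k} misses both
  F^A_{T,K} and F^B_{T,K} when k + K \<le> max t T.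
\<close>

lemma ecard_mono: "A \<subseteq> B \<Longrightarrow> ecard A \<le> ecard B"
  unfolding ecard_def by (auto intro: card_mono dest: finite_subset)

lemma ecard_Un_disjoint: "A \<inter> B = {} \<Longrightarrow> ecard (A \<union> B) = ecard A + ecard B"
  unfolding ecard_def by (auto simp: card_Un_disjoint)

lemma Fu_iff:
  "x \<in> Fu F c t \<longleftrightarrow> (\<exists>\<tau> \<kappa>. 0 < \<kappa> \<and> \<kappa> \<le> \<tau> \<and> \<tau> \<le> t \<and> x \<in> F c \<tau> \<kappa>)"
proof
  assume "x \<in> Fu F c t"
  then obtain \<tau> \<kappa> where "\<tau> \<in> {1..t}" "\<kappa> \<in> {1..\<tau>}" "x \<in> F c \<tau> \<kappa>"
    unfolding Fu_def by blast
  then show "\<exists>\<tau> \<kappa>. 0 < \<kappa> \<and> \<kappa> \<le> \<tau> \<and> \<tau> \<le> t \<and> x \<in> F c \<tau> \<kappa>"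
    by (intro exI[of _ \<tau>] exI[of _ \<kappa>]) auto
next
  assume "\<exists>\<tau> \<kappa>. 0 < \<kappa> \<and> \<kappa> \<le> \<tau> \<and> \<tau> \<le> t \<and> x \<in> F c \<tau> \<kappa>"
  then obtain \<tau> \<kappa> where "0 < \<kappa>" "\<kappa> \<le> \<tau>" "\<tau> \<le> t" "x \<in> F c \<tau> \<kappa>" by blast
  then have "\<tau> \<in> {1..t}" "\<kappa> \<in> {1..\<tau>}" by auto
  with \<open>x \<in> F c \<tau> \<kappa>\<close> show "x \<in> Fu F c t" unfolding Fu_def by blast
qed

lemma Fu_mono: "t \<le> t' \<Longrightarrow> Fu F c t \<subseteq> Fu F c t'"
  unfolding Fu_def by (rule UN_mono) auto

lemma S_mono: "t \<le> t' \<Longrightarrow> S F t \<subseteq> S F t'"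
  unfolding S_def by (intro Int_mono Fu_mono)

lemma Z_subset_S:
  assumes "0 < K" "K \<le> T" "T \<le> t'"
  shows "Z F T K \<subseteq> S F t'"
proof
  fix x assume "x \<in> Z F T K"
  then have "x \<in> F CA T K" "x \<in> F CB T K" unfolding Z_def by auto
  with assms show "x \<in> S F t'"
    unfolding S_def Int_iff Fu_iff by (intro conjI exI[of _ T] exI[of _ K]; simp)
qed

lemma Z_subset_blocks: "Z F T K \<subseteq> F CA T K \<union> F CB T K"
  unfolding Z_def by blast

lemma F_system_disjoint:
  assumes "F_system F" "0 < k" "k \<le> t" "0 < k'" "k' \<le> t'" "k + k' \<le> max t t'"
  shows "F CA t k \<inter> F CB t' k' = {}"
  using assms unfolding F_system_def by blast

lemma S_disjoint_blocks:
  assumes F: "F_system F" and K: "0 < K" "K \<le> T" and small: "t' + K \<le> T"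
  shows "S F t' \<inter> (F CA T K \<union> F CB T K) = {}"
proof -
  have "x \<notin> F CB T K" if "x \<in> Fu F CA t'" for x
  proof -
    from that obtain \<tau> \<kappa> where "0 < \<kappa>" "\<kappa> \<le> \<tau>" "\<tau> \<le> t'" "x \<in> F CA \<tau> \<kappa>"
      unfolding Fu_iff by blast
    with F_system_disjoint[OF F, of \<kappa> \<tau> K T] K small show ?thesis by auto
  qed
  moreover have "x \<notin> F CA T K" if "x \<in> Fu F CB t'" for x
  proof -
    from that obtain \<tau> \<kappa> where "0 < \<kappa>" "\<kappa> \<le> \<tau>" "\<tau> \<le> t'" "x \<in> F CB \<tau> \<kappa>"
      unfolding Fu_iff by blast
    with F_system_disjoint[OF F, of K T \<kappa> \<tau>] K small show ?thesis by auto
  qed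
  ultimately show ?thesis unfolding S_def by blast
qed

lemma Z_disjoint_blocks:
  assumes F: "F_system F" and k: "0 < k" "k \<le> t" and K: "0 < K" "K \<le> T"
    and small: "k + K \<le> max t T"
  shows "Z F t k \<inter> (F CA T K \<union> F CB T K) = {}"
proof -
  have "F CA t k \<inter> F CB T K = {}"
    using F_system_disjoint[OF F k K small] .
  moreover have "F CA T K \<inter> F CB t k = {}"
    using F_system_disjoint[OF F K k] small by (simp add: add.commute max.commute)
  ultimately show ?thesis unfolding Z_def by blast
qed

theorem lemma4:
  fixes F :: "col \<Rightarrow> nat \<Rightarrow> nat \<Rightarrow> nat set" and t :: nat
  assumes "F_system F" and "even t" and "0 < t"
  shows "ecard (S F (2*t) - Z F (3*t) (2*t))
           \<ge> ecard (S F t \<union> Z F (3*t div 2) t) + ecard (S2 F t)"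
proof -
  from assms(2) obtain s where t: "t = 2*s" by (rule evenE)
  with assms(3) have s: "0 < s" by simp
  have idx: "2*t = 4*s" "3*t = 6*s" "2*(2*s) = 4*s" using t by simp_all
  define P where "P = S F (2*s) \<union> Z F (3*s) (2*s)"
  define Q where "Q = S2 F (2*s)"
  \<comment> \<open>the block pairs at (4s,2s) and (6s,4s); S_{2s,...} lives in the first, Z_{6s,4s} in the second\<close>
  define B2 where "B2 = F CA (4*s) (2*s) \<union> F CB (4*s) (2*s)"
  define B4 where "B4 = F CA (6*s) (4*s) \<union> F CB (6*s) (4*s)"
  have Q_B2: "Q \<subseteq> B2" and Q_S: "Q \<subseteq> S F (4*s)"
    unfolding Q_def S2_def B2_def idx by blast+
  have P_S: "P \<subseteq> S F (4*s)"
    using S_mono[of "2*s" "4*s" F] Z_subset_S[of "2*s" "3*s" "4*s" F] s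
    unfolding P_def by simp
  \<comment> \<open>the (F2) index conditions: 2s+2s \<le> 4s and 2s+4s \<le> 6s\<close>
  have S_B2: "S F (2*s) \<inter> B2 = {}" and S_B4: "S F (2*s) \<inter> B4 = {}"
    unfolding B2_def B4_def using s by (simp_all add: S_disjoint_blocks assms(1))
  have Z_B2: "Z F (3*s) (2*s) \<inter> B2 = {}" and Z_B4: "Z F (3*s) (2*s) \<inter> B4 = {}"
    and Z'_B2: "Z F (6*s) (4*s) \<inter> B2 = {}"
    unfolding B2_def B4_def using s by (simp_all add: Z_disjoint_blocks assms(1))
  have "P \<union> Q \<subseteq> S F (4*s) - Z F (6*s) (4*s)"
    using P_S Q_S S_B4 Z_B4 Z'_B2 Q_B2 Z_subset_blocks[of F "6*s" "4*s"]
    unfolding P_def B4_def by blast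
  then have sub: "P \<union> Q \<subseteq> S F (2*t) - Z F (3*t) (2*t)" unfolding idx .
  have P_t: "P = S F t \<union> Z F (3*t div 2) t" and Q_t: "Q = S2 F t"
    unfolding P_def Q_def t by simp_all
  have disj: "P \<inter> Q = {}" using S_B2 Z_B2 Q_B2 unfolding P_def by blast
  have "ecard P + ecard Q = ecard (P \<union> Q)" by (rule ecard_Un_disjoint[OF disj, symmetric])
  also have "\<dots> \<le> ecard (S F (2*t) - Z F (3*t) (2*t))" by (rule ecard_mono[OF sub])
  finally show ?thesis unfolding P_t Q_t .
qed

end
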